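(* Let $mG_1,\dots,mG_n$ be a finite sequence of canonical misinformation games such that $mG_{i+1}\in\mathcal{AD}(\{mG_i\})$ for all $i\in\{1,\dots,n-1\}$ and $mG_1\in\mathcal{AD}(\{mG_n\})$. Then $mG_i=mG_j$ for all $i,j$.
   Context: A normal-form game is $G=\langle N,S,P\rangle$ with finite players $N$, finite pure strategy sets $S_i$, positions $S=\times_i S_i$, payoffs $P_i:S\to\mathbb{R}$. A misinformation game $mG=\langle G^0,G^1,\dots,G^{|N|}\rangle$ consists of the actual game $G^0$ and subjective games $G^i$; it is canonical if all $G^i=\langle N,S,P^i\rangle$ differ from $G^0$ only in payoffs and in every $G^i$ all players have equally many pure strategies. $NME(mG)$ is the set of profiles $\sigma=(\sigma_1,\dots,\sigma_{|N|})$ such that each $\sigma_i$ is player $i$'s component of some Nash equilibrium of $G^i$. $\chi(\sigma)=\mathrm{supp}(\sigma_1)\times\dots\times\mathrm{supp}(\sigma_{|N|})$. For $\vec v\in S$, $mG_{\vec v}$ is obtained by replacing, in every $P^i$ ($i\ge1$), the payoff vector at position $\vec v$ by $P^0(\vec v)$ (the actual game $G^0$ is unchanged). For a set $M$ of misinformation games, $\mathcal{AD}(M)=\{mG_{\vec u}: mG\in M,\sigma\in NME(mG),\vec u\in\chi(\sigma)\}$. *)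

theory Defs
  imports Complex_Main
begin

text \<open>Normal-form games. The set of players is the finite type 'n (N = UNIV).
  A pure strategy profile (position) is a function v :: 'n => 's with v i in S i.\<close>

record ('n, 's) nfgame =
  strats :: "'n \<Rightarrow> 's set"
  payoff :: "'n \<Rightarrow> ('n \<Rightarrow> 's) \<Rightarrow> real"

definition positions :: "('n, 's) nfgame \<Rightarrow> ('n \<Rightarrow> 's) set" where
  "positions G = {v. \<forall>i. v i \<in> strats G i}"

definition wf_game :: "('n::finite, 's) nfgame \<Rightarrow> bool" where
  "wf_game G \<longleftrightarrow> (\<forall>i. finite (strats G i) \<and> strats G i \<noteq> {})"

definition mixed_strategy :: "('n, 's) nfgame \<Rightarrow> 'n \<Rightarrow> ('s \<Rightarrow> real) \<Rightarrow> bool" where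
  "mixed_strategy G i s \<longleftrightarrow>
     (\<forall>x. s x \<ge> 0) \<and> (\<forall>x. x \<notin> strats G i \<longrightarrow> s x = 0) \<and> sum s (strats G i) = 1"

definition mixed_profile :: "('n, 's) nfgame \<Rightarrow> ('n \<Rightarrow> 's \<Rightarrow> real) \<Rightarrow> bool" where
  "mixed_profile G \<sigma> \<longleftrightarrow> (\<forall>i. mixed_strategy G i (\<sigma> i))"

definition exp_payoff :: "('n::finite, 's) nfgame \<Rightarrow> 'n \<Rightarrow> ('n \<Rightarrow> 's \<Rightarrow> real) \<Rightarrow> real" where
  "exp_payoff G j \<sigma> = (\<Sum>v\<in>positions G. (\<Prod>k\<in>UNIV. \<sigma> k (v k)) * payoff G j v)"

definition nash_eq :: "('n::finite, 's) nfgame \<Rightarrow> ('n \<Rightarrow> 's \<Rightarrow> real) \<Rightarrow> bool" where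
  "nash_eq G \<sigma> \<longleftrightarrow> mixed_profile G \<sigma> \<and>
     (\<forall>j \<tau>. mixed_strategy G j \<tau> \<longrightarrow> exp_payoff G j (\<sigma>(j := \<tau>)) \<le> exp_payoff G j \<sigma>)"

record ('n, 's) mgame =
  actual :: "('n, 's) nfgame"
  subj :: "'n \<Rightarrow> ('n, 's) nfgame"

text \<open>Canonical: every subjective game has the same players (the type 'n) and the same
  strategy sets as the actual game, differing only in payoffs.\<close>
definition canonical :: "('n::finite, 's) mgame \<Rightarrow> bool" where
  "canonical mG \<longleftrightarrow> wf_game (actual mG) \<and> (\<forall>i. strats (subj mG i) = strats (actual mG))"

definition NME :: "('n::finite, 's) mgame \<Rightarrow> ('n \<Rightarrow> 's \<Rightarrow> real) set" where
  "NME mG = {\<sigma>. \<forall>i. \<exists>\<tau>. nash_eq (subj mG i) \<tau> \<and> \<sigma> i = \<tau> i}"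

definition supp :: "('s \<Rightarrow> real) \<Rightarrow> 's set" where
  "supp s = {x. s x \<noteq> 0}"

definition chi :: "('n \<Rightarrow> 's \<Rightarrow> real) \<Rightarrow> ('n \<Rightarrow> 's) set" where
  "chi \<sigma> = {v. \<forall>i. v i \<in> supp (\<sigma> i)}"

definition adapt :: "('n, 's) mgame \<Rightarrow> ('n \<Rightarrow> 's) \<Rightarrow> ('n, 's) mgame" where
  "adapt mG v = mG\<lparr>subj := (\<lambda>i. (subj mG i)\<lparr>payoff :=
      (\<lambda>j. (payoff (subj mG i) j)(v := payoff (actual mG) j v))\<rparr>)\<rparr>"

definition AD :: "('n::finite, 's) mgame set \<Rightarrow> ('n, 's) mgame set" where
  "AD M = {adapt mG u | mG \<sigma> u. mG \<in> M \<and> \<sigma> \<in> NME mG \<and> u \<in> chi \<sigma>}"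

end

theory Submission
  imports Defs
begin

text \<open>Adapting a misinformation game at a position only removes misinformation, i.e. the
  triples (i, j, v) at which player i's view of j's payoff at v differs from the actual payoff,
  and it changes the game only if it removes some. Along the cycle the set of misinformation
  therefore shrinks weakly and returns to where it started, so it is constant, and then every
  adaptation step leaves its game unchanged. Neither canonicity nor equilibria play a role.\<close>

definition misinformation :: "('n, 's) mgame \<Rightarrow> ('n \<times> 'n \<times> ('n \<Rightarrow> 's)) set" where
  "misinformation m = {(i, j, v). payoff (subj m i) j v \<noteq> payoff (actual m) j v}"

lemma misinformation_adapt:
  "misinformation (adapt m u) = misinformation m - {(i, j, v). v = u}"
  unfolding misinformation_def adapt_def by auto

lemma adapt_eq_selfI:
  assumes "misinformation m \<subseteq> misinformation (adapt m u)"
  shows "adapt m u = m"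
proof -
  have "payoff (subj m i) j u = payoff (actual m) j u" for i j
    using assms unfolding misinformation_adapt by (auto simp: misinformation_def)
  then have "(\<lambda>j. (payoff (subj m i) j)(u := payoff (actual m) j u)) = payoff (subj m i)" for i
    by (simp add: fun_upd_idem)
  then show ?thesis
    unfolding adapt_def by simp
qed

lemma AD_singleton_subset: "AD {m} \<subseteq> range (adapt m)"
  unfolding AD_def by auto

lemma misinformation_AD_singleton:
  "m' \<in> AD {m} \<Longrightarrow> misinformation m' \<subseteq> misinformation m"
  using AD_singleton_subset[of m] by (auto simp: misinformation_adapt)

lemma AD_singleton_eqI:
  assumes "m' \<in> AD {m}" and "misinformation m \<subseteq> misinformation m'"
  shows "m' = m"
  using assms AD_singleton_subset adapt_eq_selfI by blast

lemma cyclic_antitone_const: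
  fixes f :: "nat \<Rightarrow> 'a::order"
  assumes antitone: "\<forall>k\<in>{1..<n}. f (Suc k) \<le> f k"
    and cycle: "f 1 \<le> f n"
    and k: "k \<in> {1..n}"
  shows "f k = f 1"
proof -
  have mono: "f (Suc k) \<le> f k" if "k \<in> {1..<n}" for k
    using antitone that by blast
  have "f k \<le> f 1"
    by (rule lift_Suc_antimono_le_ivl[where f = f and N = "{1..<n}", OF mono]) (use k in auto)
  moreover have "f n \<le> f k"
    by (rule lift_Suc_antimono_le_ivl[where f = f and N = "{1..<n}", OF mono]) (use k in auto)
  ultimately show ?thesis
    using cycle by order
qed

lemma Suc_eq_chain_const:
  assumes "\<forall>k\<in>{1..<n}. f (Suc k) = f k" and "k \<in> {1..n}"
  shows "f k = f 1"
  using assms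
proof (induction k)
  case (Suc k)
  then show ?case
    by (cases "k = 0") auto
qed simp

theorem proposition9:
  fixes mG :: "nat \<Rightarrow> ('n::finite, 's) mgame" and n :: nat
  assumes "n \<ge> 1"
    and "\<forall>i\<in>{1..n}. canonical (mG i)"
    and "\<forall>i\<in>{1..<n}. mG (Suc i) \<in> AD {mG i}"
    and "mG 1 \<in> AD {mG n}"
  shows "\<forall>i\<in>{1..n}. \<forall>j\<in>{1..n}. mG i = mG j"
proof -
  have antitone: "\<forall>k\<in>{1..<n}. misinformation (mG (Suc k)) \<subseteq> misinformation (mG k)"
    using assms(3) misinformation_AD_singleton by blast
  have cycle: "misinformation (mG 1) \<subseteq> misinformation (mG n)"
    using assms(4) by (rule misinformation_AD_singleton)
  have misinformation_const: "misinformation (mG k) = misinformation (mG 1)" if "k \<in> {1..n}" for k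
    using cyclic_antitone_const[OF antitone cycle that] .
  have "\<forall>k\<in>{1..<n}. mG (Suc k) = mG k"
  proof
    fix k
    assume k: "k \<in> {1..<n}"
    then have "k \<in> {1..n}" and "Suc k \<in> {1..n}"
      by auto
    then have "misinformation (mG k) = misinformation (mG (Suc k))"
      by (simp only: misinformation_const)
    then show "mG (Suc k) = mG k"
      using k assms(3) by (intro AD_singleton_eqI) auto
  qed
  then have "mG k = mG 1" if "k \<in> {1..n}" for k
    using that by (rule Suc_eq_chain_const)
  then show ?thesis
    by (metis (no_types))
qed

end
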